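(* Let $w_c, w_r \in \mathbb{N}$ with $w_c \le w_r$, and let $G$ be a finite simple $(w_c,w_r)$-regular bipartite graph with parts $\mathcal{V}_c$ and $\mathcal{V}_r$, where $n = |\mathcal{V}_c|$ and $m = |\mathcal{V}_r|$ (so $m \le n$, i.e. $\mathcal{V}_r$ is the smaller part). If $G$ has girth $8$, then $$ m \;\ge\; \frac{-w_c(w_c-2) + w_c\sqrt{(w_c-2)^2 + 4(w_c-1)n}}{2}. $$
   Context: A $(w_c,w_r)$-regular bipartite graph is a bipartite graph with parts $\mathcal{V}_c$ ("variable nodes") and $\mathcal{V}_r$ ("check nodes") such that every vertex of $\mathcal{V}_c$ has degree $w_c$ and every vertex of $\mathcal{V}_r$ has degree $w_r$; in particular $w_c n = w_r m$. The girth of a graph is the length of its shortest cycle. *)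

theory Defs
  imports Complex_Main
begin

definition bipartite_graph :: "'a set \<Rightarrow> 'a set \<Rightarrow> ('a \<times> 'a) set \<Rightarrow> bool" where
  "bipartite_graph Vc Vr E \<longleftrightarrow> finite Vc \<and> finite Vr \<and> Vc \<inter> Vr = {} \<and> E \<subseteq> Vc \<times> Vr"

definition biregular :: "'a set \<Rightarrow> 'a set \<Rightarrow> ('a \<times> 'a) set \<Rightarrow> nat \<Rightarrow> nat \<Rightarrow> bool" where
  "biregular Vc Vr E wc wr \<longleftrightarrow>
     (\<forall>v\<in>Vc. card {c\<in>Vr. (v, c) \<in> E} = wc) \<and>
     (\<forall>c\<in>Vr. card {v\<in>Vc. (v, c) \<in> E} = wr)"

definition adj :: "('a \<times> 'a) set \<Rightarrow> 'a \<Rightarrow> 'a \<Rightarrow> bool" where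
  "adj E x y \<longleftrightarrow> (x, y) \<in> E \<or> (y, x) \<in> E"

definition is_cycle :: "('a \<times> 'a) set \<Rightarrow> 'a list \<Rightarrow> bool" where
  "is_cycle E xs \<longleftrightarrow> length xs \<ge> 3 \<and> distinct xs \<and>
     (\<forall>i < length xs. adj E (xs ! i) (xs ! ((i + 1) mod length xs)))"

definition has_girth :: "('a \<times> 'a) set \<Rightarrow> nat \<Rightarrow> bool" where
  "has_girth E g \<longleftrightarrow> (\<exists>xs. is_cycle E xs \<and> length xs = g) \<and>
     (\<forall>xs. is_cycle E xs \<longrightarrow> g \<le> length xs)"

end

theory Submission
  imports Defs
begin

text \<open>Fix a variable node v. Its wc check neighbours and the wc (wr - 1) (wc - 1) check nodes
  reached from v by non-backtracking walks of length 3 are pairwise distinct, since any coincidence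
  closes a cycle of length 4 or 6. Hence m \<ge> wc (1 + (wr - 1) (wc - 1)), and together with the
  edge count m wr = n wc this says that m is at least the positive root of
  x^2 + wc (wc - 2) x - wc^2 (wc - 1) n.\<close>

lemma is_cycleI:
  assumes "3 \<le> length xs" "distinct xs" "successively (adj E) xs" "adj E (last xs) (hd xs)"
  shows "is_cycle E xs"
  unfolding is_cycle_def
proof (intro conjI allI impI)
  fix i assume i: "i < length xs"
  show "adj E (xs ! i) (xs ! ((i + 1) mod length xs))"
  proof (cases "Suc i < length xs")
    case True
    then show ?thesis using successively_nth[OF assms(3)] by simp
  next
    case False
    then have "Suc i = length xs" using i by simp
    moreover have "xs \<noteq> []" using assms(1) by auto
    ultimately have "xs ! i = last xs" "xs ! ((i + 1) mod length xs) = hd xs"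
      by (simp_all add: last_conv_nth hd_conv_nth flip: \<open>Suc i = length xs\<close>)
    then show ?thesis using assms(4) by simp
  qed
qed (use assms in auto)

lemma is_cycle_imp_edge:
  assumes "is_cycle E xs"
  obtains x y where "(x, y) \<in> E"
proof -
  have "0 < length xs" and "\<forall>i < length xs. adj E (xs ! i) (xs ! ((i + 1) mod length xs))"
    using assms unfolding is_cycle_def by auto
  then have "\<exists>x y. adj E x y" by blast
  then show ?thesis using that unfolding adj_def by blast
qed

lemma card_eq_sum_card_fibres:
  assumes "R \<subseteq> A \<times> B" "finite A" "finite B"
  shows "card R = (\<Sum>a\<in>A. card {b\<in>B. (a, b) \<in> R})"
proof -
  have "R = (SIGMA a:A. {b\<in>B. (a, b) \<in> R})" using assms(1) by auto
  also have "card \<dots> = (\<Sum>a\<in>A. card {b\<in>B. (a, b) \<in> R})"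
    by (rule card_SigmaI) (use assms(2,3) in auto)
  finally show ?thesis .
qed

lemma card_converse: "card (R\<inverse>) = card R"
proof -
  have "R\<inverse> = prod.swap ` R" by force
  then show ?thesis by (simp add: card_image)
qed

lemma ge_quadratic_root:
  fixes b c x :: real
  assumes "0 \<le> x\<^sup>2 + b * x + c" "0 \<le> 2 * x + b"
  shows "(- b + sqrt (b\<^sup>2 - 4 * c)) / 2 \<le> x"
proof -
  have "b\<^sup>2 - 4 * c \<le> (2 * x + b)\<^sup>2" using assms(1) by (simp add: power2_eq_square algebra_simps)
  then have "sqrt (b\<^sup>2 - 4 * c) \<le> \<bar>2 * x + b\<bar>" using real_sqrt_le_mono by fastforce
  then show ?thesis using assms(2) by simp
qed

lemma check_count_imp_root_bound:
  fixes w r m n :: real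
  assumes "1 \<le> w" "1 \<le> r" "m * r = n * w" "w * (1 + (r - 1) * (w - 1)) \<le> m"
  shows "(- w * (w - 2) + w * sqrt ((w - 2)\<^sup>2 + 4 * (w - 1) * n)) / 2 \<le> m"
proof -
  have "w \<le> w * (1 + (r - 1) * (w - 1))" using assms(1,2) by simp
  then have "w \<le> m" using assms(4) by linarith
  moreover have "w * (w - 2) = w * w - 2 * w" by (simp add: algebra_simps)
  ultimately have vertex: "0 \<le> 2 * m + w * (w - 2)" using zero_le_square[of w] by linarith
  have "w\<^sup>2 * (w - 1) * n = w * (w - 1) * (m * r)"
    unfolding assms(3) by (simp add: power2_eq_square algebra_simps)
  then have "m\<^sup>2 + w * (w - 2) * m - w\<^sup>2 * (w - 1) * n = m * (m - w * (1 + (r - 1) * (w - 1)))"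
    by (simp add: power2_eq_square algebra_simps)
  also have "0 \<le> \<dots>" using assms(1,4) \<open>w \<le> m\<close> by simp
  finally have root: "0 \<le> m\<^sup>2 + w * (w - 2) * m + - (w\<^sup>2 * (w - 1) * n)" by simp
  have "sqrt ((w * (w - 2))\<^sup>2 - 4 * - (w\<^sup>2 * (w - 1) * n))
      = sqrt (w\<^sup>2 * ((w - 2)\<^sup>2 + 4 * (w - 1) * n))"
    by (simp add: power2_eq_square algebra_simps)
  also have "\<dots> = w * sqrt ((w - 2)\<^sup>2 + 4 * (w - 1) * n)"
    using assms(1) by (simp add: real_sqrt_mult)
  finally show ?thesis using ge_quadratic_root[OF root vertex] by simp
qed

locale biregular_bipartite_graph =
  fixes Vc Vr :: "'a set" and E :: "('a \<times> 'a) set" and wc wr :: nat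
  assumes bipartite: "bipartite_graph Vc Vr E"
    and biregular: "biregular Vc Vr E wc wr"
begin

definition check_nbrs :: "'a \<Rightarrow> 'a set" where
  "check_nbrs v = {c\<in>Vr. (v, c) \<in> E}"

definition var_nbrs :: "'a \<Rightarrow> 'a set" where
  "var_nbrs c = {v\<in>Vc. (v, c) \<in> E}"

lemma finite_Vc: "finite Vc" and finite_Vr: "finite Vr"
  using bipartite unfolding bipartite_graph_def by auto

lemma edgeD: "(x, y) \<in> E \<Longrightarrow> x \<in> Vc \<and> y \<in> Vr"
  using bipartite unfolding bipartite_graph_def by auto

lemma Vc_Vr_neq: "x \<in> Vc \<Longrightarrow> y \<in> Vr \<Longrightarrow> x \<noteq> y"
  using bipartite unfolding bipartite_graph_def by auto

lemma mem_check_nbrs_iff [simp]: "c \<in> check_nbrs v \<longleftrightarrow> (v, c) \<in> E"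
  using edgeD unfolding check_nbrs_def by auto

lemma mem_var_nbrs_iff [simp]: "v \<in> var_nbrs c \<longleftrightarrow> (v, c) \<in> E"
  using edgeD unfolding var_nbrs_def by auto

lemma finite_check_nbrs [simp]: "finite (check_nbrs v)"
  using finite_Vr unfolding check_nbrs_def by simp

lemma finite_var_nbrs [simp]: "finite (var_nbrs c)"
  using finite_Vc unfolding var_nbrs_def by simp

lemma card_check_nbrs: "v \<in> Vc \<Longrightarrow> card (check_nbrs v) = wc"
  using biregular unfolding biregular_def check_nbrs_def by simp

lemma card_var_nbrs: "c \<in> Vr \<Longrightarrow> card (var_nbrs c) = wr"
  using biregular unfolding biregular_def var_nbrs_def by simp

lemma edge_imp_degrees_pos:
  assumes "(v, c) \<in> E"
  shows "1 \<le> wc" and "1 \<le> wr"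
proof -
  have "0 < card (check_nbrs v)" "0 < card (var_nbrs c)" using assms by (auto simp: card_gt_0_iff)
  then show "1 \<le> wc" "1 \<le> wr" using edgeD[OF assms] by (simp_all add: card_check_nbrs card_var_nbrs)
qed

lemma card_Vr_wr_eq_card_Vc_wc: "card Vr * wr = card Vc * wc"
proof -
  have "card E = (\<Sum>v\<in>Vc. card (check_nbrs v))"
    unfolding check_nbrs_def by (rule card_eq_sum_card_fibres) (use edgeD finite_Vc finite_Vr in auto)
  also have "\<dots> = card Vc * wc" by (simp add: card_check_nbrs)
  finally have "card E = card Vc * wc" .
  have "card (E\<inverse>) = (\<Sum>c\<in>Vr. card {v\<in>Vc. (c, v) \<in> E\<inverse>})"
    by (rule card_eq_sum_card_fibres) (use edgeD finite_Vc finite_Vr in auto)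
  also have "\<dots> = (\<Sum>c\<in>Vr. card (var_nbrs c))" unfolding var_nbrs_def by simp
  also have "\<dots> = card Vr * wr" by (simp add: card_var_nbrs)
  finally show ?thesis using \<open>card E = card Vc * wc\<close> card_converse[of E] by simp
qed

definition nb_walks3 :: "'a \<Rightarrow> ('a \<times> 'a \<times> 'a) set" where
  "nb_walks3 v = (SIGMA c1:check_nbrs v. SIGMA u:var_nbrs c1 - {v}. check_nbrs u - {c1})"

lemma card_nb_walks3:
  assumes "v \<in> Vc"
  shows "card (nb_walks3 v) = wc * ((wr - 1) * (wc - 1))"
proof -
  have "card (SIGMA u:var_nbrs c1 - {v}. check_nbrs u - {c1}) = (wr - 1) * (wc - 1)"
    if "c1 \<in> check_nbrs v" for c1
  proof -
    have "card (check_nbrs u - {c1}) = wc - 1" if "u \<in> var_nbrs c1 - {v}" for u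
      using that edgeD[of u c1] by (simp add: card_check_nbrs)
    then have "card (SIGMA u:var_nbrs c1 - {v}. check_nbrs u - {c1}) = card (var_nbrs c1 - {v}) * (wc - 1)"
      by simp
    moreover have "card (var_nbrs c1 - {v}) = wr - 1"
      using that edgeD[of v c1] by (simp add: card_var_nbrs)
    ultimately show ?thesis by simp
  qed
  then show ?thesis
    unfolding nb_walks3_def using assms by (simp add: card_check_nbrs)
qed

lemma nb_walk3_end_notin_check_nbrs:
  assumes no_4_cycle: "\<And>xs. is_cycle E xs \<Longrightarrow> 4 < length xs"
    and walk: "(c1, u, c2) \<in> nb_walks3 v"
  shows "c2 \<notin> check_nbrs v"
proof
  assume "c2 \<in> check_nbrs v"
  with walk have "is_cycle E [v, c1, u, c2]"
    by (intro is_cycleI) (auto simp: nb_walks3_def adj_def dest!: edgeD dest: Vc_Vr_neq)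
  then show False using no_4_cycle by fastforce
qed

lemma nb_walks3_same_end:
  assumes no_short_cycle: "\<And>xs. is_cycle E xs \<Longrightarrow> 6 < length xs"
    and walk1: "(c1, u, c2) \<in> nb_walks3 v" and walk2: "(d1, u', c2) \<in> nb_walks3 v"
  shows "c1 = d1 \<and> u = u'"
proof -
  have no_cycle: "\<not> is_cycle E xs" if "length xs \<le> 6" for xs
    using no_short_cycle that by fastforce
  have "u = u'"
  proof (rule ccontr)
    assume "u \<noteq> u'"
    show False
    proof (cases "c1 = d1")
      case True
      with walk1 walk2 \<open>u \<noteq> u'\<close> have "is_cycle E [c1, u, c2, u']"
        by (intro is_cycleI) (auto simp: nb_walks3_def adj_def dest!: edgeD dest: Vc_Vr_neq)
      then show False using no_cycle by simp
    next
      case False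
      with walk1 walk2 \<open>u \<noteq> u'\<close> have "is_cycle E [v, c1, u, c2, u', d1]"
        by (intro is_cycleI) (auto simp: nb_walks3_def adj_def dest!: edgeD dest: Vc_Vr_neq)
      then show False using no_cycle by simp
    qed
  qed
  moreover have "c1 = d1"
  proof (rule ccontr)
    assume "c1 \<noteq> d1"
    with walk1 walk2 \<open>u = u'\<close> have "is_cycle E [v, c1, u, d1]"
      by (intro is_cycleI) (auto simp: nb_walks3_def adj_def dest!: edgeD dest: Vc_Vr_neq)
    then show False using no_cycle by simp
  qed
  ultimately show ?thesis by simp
qed

lemma card_Vr_ge_Moore_bound:
  assumes no_short_cycle: "\<And>xs. is_cycle E xs \<Longrightarrow> 6 < length xs" and "v \<in> Vc"
  shows "wc * (1 + (wr - 1) * (wc - 1)) \<le> card Vr"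
proof -
  let ?end = "\<lambda>(c1, u, c2). c2"
  have "inj_on ?end (nb_walks3 v)"
  proof (rule inj_onI)
    fix x y
    assume x: "x \<in> nb_walks3 v" and y: "y \<in> nb_walks3 v" and "?end x = ?end y"
    moreover obtain c1 u c2 d1 u' d2 where "x = (c1, u, c2)" "y = (d1, u', d2)"
      by (cases x, cases y)
    ultimately show "x = y" using nb_walks3_same_end[OF no_short_cycle, of c1 u c2 v d1 u'] by simp
  qed
  moreover have "?end ` nb_walks3 v \<subseteq> Vr - check_nbrs v"
  proof -
    have no_4_cycle: "\<And>xs. is_cycle E xs \<Longrightarrow> 4 < length xs" using no_short_cycle by fastforce
    have "c2 \<in> Vr - check_nbrs v" if "(c1, u, c2) \<in> nb_walks3 v" for c1 u c2
      using that nb_walk3_end_notin_check_nbrs[OF no_4_cycle that] edgeD[of u c2]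
      by (simp add: nb_walks3_def)
    then show ?thesis by auto
  qed
  ultimately have "card (nb_walks3 v) \<le> card (Vr - check_nbrs v)"
    using card_inj_on_le finite_Vr by blast
  moreover have "check_nbrs v \<subseteq> Vr" using edgeD by auto
  then have "card (Vr - check_nbrs v) = card Vr - wc" and "wc \<le> card Vr"
    using \<open>v \<in> Vc\<close> card_mono[OF finite_Vr] card_check_nbrs
    by (simp_all add: card_Diff_subset) metis
  ultimately show ?thesis using card_nb_walks3[OF \<open>v \<in> Vc\<close>] by simp
qed

end

theorem theorem1:
  fixes Vc Vr :: "'a set" and E :: "('a \<times> 'a) set" and wc wr :: nat
  assumes "wc \<le> wr"
    and "bipartite_graph Vc Vr E"
    and "biregular Vc Vr E wc wr"
    and "has_girth E 8"
  shows "real (card Vr) \<ge>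
    (- real wc * (real wc - 2)
      + real wc * sqrt ((real wc - 2)^2 + 4 * (real wc - 1) * real (card Vc))) / 2"
proof -
  \<comment> \<open>The hypothesis wc \<le> wr only says that Vr is the smaller part.\<close>
  interpret biregular_bipartite_graph Vc Vr E wc wr
    using assms(2,3) by unfold_locales
  have no_short_cycle: "\<And>xs. is_cycle E xs \<Longrightarrow> 6 < length xs"
    using assms(4) unfolding has_girth_def by fastforce
  obtain v c where "(v, c) \<in> E"
    using assms(4) is_cycle_imp_edge unfolding has_girth_def by blast
  then have "v \<in> Vc" and "1 \<le> wc" and "1 \<le> wr"
    using edgeD edge_imp_degrees_pos by auto
  have "wc * (1 + (wr - 1) * (wc - 1)) \<le> card Vr"
    using card_Vr_ge_Moore_bound[OF no_short_cycle \<open>v \<in> Vc\<close>] .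
  moreover have "real (wc * (1 + (wr - 1) * (wc - 1))) = real wc * (1 + (real wr - 1) * (real wc - 1))"
    using \<open>1 \<le> wc\<close> \<open>1 \<le> wr\<close> by (simp add: of_nat_diff distrib_left)
  ultimately have "real wc * (1 + (real wr - 1) * (real wc - 1)) \<le> real (card Vr)"
    by (metis of_nat_le_iff)
  moreover have "real (card Vr) * real wr = real (card Vc) * real wc"
    using card_Vr_wr_eq_card_Vc_wc by (metis of_nat_mult)
  ultimately show ?thesis
    using \<open>1 \<le> wc\<close> \<open>1 \<le> wr\<close> by (intro check_count_imp_root_bound) simp_all
qed

end
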